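(* Let $G$ be a finitely generated group. If the finite index membership problem $MP_{f.i.}(G)$ is decidable, then $GCP_{Rec}(G)$ is decidable: there is an algorithm which, given a recognizable subset $K\subseteq G$ and $g\in G$, decides whether some conjugate of $g$ in $G$ lies in $K$.
   Context: $MP_{f.i.}(G)$ is the problem of deciding, given $g\in G$ and a finite index subgroup $H\le G$, whether $g\in H$. A subset $K$ of $G$ is recognizable if its full preimage in the free monoid $\tilde A^*$ on $A\cup A^{-1}$ (for a finite generating set $A$) is a rational (regular) language; equivalently $K$ is a finite union of cosets $Hb_1\cup\cdots\cup Hb_m$ of a finite index subgroup $H\le G$, and recognizable subsets are given in this form. *)

theory Defs
  imports "HOL-Algebra.Generated_Groups" "HOL-Library.Nat_Bijection"
begin

text \<open>Unary partial recursive functions on natural numbers, tuples being coded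
with the Cantor pairing prod_encode. Zero, successor, identity, projections,
composition, pairing, primitive recursion and unbounded minimisation; this is
a standard Turing-complete model.\<close>

datatype recf =
    Zero | Succ | Ident | Fst | Snd
  | Comp recf recf
  | Pair recf recf
  | Prec recf recf
  | Mu recf

inductive eval :: "recf \<Rightarrow> nat \<Rightarrow> nat \<Rightarrow> bool" where
  "eval Zero x 0"
| "eval Succ x (Suc x)"
| "eval Ident x x"
| "eval Fst x (fst (prod_decode x))"
| "eval Snd x (snd (prod_decode x))"
| "eval f x y \<Longrightarrow> eval g y z \<Longrightarrow> eval (Comp g f) x z"
| "eval f x y \<Longrightarrow> eval g x z \<Longrightarrow> eval (Pair f g) x (prod_encode (y, z))"
| "eval f x y \<Longrightarrow> eval (Prec f g) (prod_encode (x, 0)) y"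
| "eval (Prec f g) (prod_encode (x, n)) y \<Longrightarrow>
   eval g (prod_encode (x, prod_encode (n, y))) z \<Longrightarrow>
   eval (Prec f g) (prod_encode (x, Suc n)) z"
| "eval f (prod_encode (x, n)) 0 \<Longrightarrow>
   (\<forall>m<n. \<exists>k. eval f (prod_encode (x, m)) (Suc k)) \<Longrightarrow>
   eval (Mu f) x n"

text \<open>A (promise) decision problem: on every valid instance x (V x) the
algorithm halts with output 1 if P x holds and 0 otherwise.\<close>

definition decidable_on :: "(nat \<Rightarrow> bool) \<Rightarrow> (nat \<Rightarrow> bool) \<Rightarrow> bool" where
  "decidable_on V P \<longleftrightarrow> (\<exists>f. \<forall>x. V x \<longrightarrow> eval f x (if P x then 1 else 0))"

text \<open>Letters of the alphabet A \<union> A^-1 for A = set gens are natural numbers: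
2i stands for gens!i and 2i+1 for its inverse. Other letters are read as the
identity (a decidable convention that does not affect decidability).\<close>

definition gen_letter :: "('a, 'b) monoid_scheme \<Rightarrow> 'a list \<Rightarrow> nat \<Rightarrow> 'a" where
  "gen_letter G gens k =
     (if k < 2 * length gens
      then (if even k then gens ! (k div 2) else inv\<^bsub>G\<^esub> (gens ! (k div 2)))
      else \<one>\<^bsub>G\<^esub>)"

definition word_val :: "('a, 'b) monoid_scheme \<Rightarrow> 'a list \<Rightarrow> nat list \<Rightarrow> 'a" where
  "word_val G gens w = foldr (\<lambda>k acc. gen_letter G gens k \<otimes>\<^bsub>G\<^esub> acc) w \<one>\<^bsub>G\<^esub>"

definition subgrp_of_words :: "('a, 'b) monoid_scheme \<Rightarrow> 'a list \<Rightarrow> nat list list \<Rightarrow> 'a set" where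
  "subgrp_of_words G gens hs = generate G (word_val G gens ` set hs)"

definition finite_index :: "('a, 'b) monoid_scheme \<Rightarrow> 'a set \<Rightarrow> bool" where
  "finite_index G H \<longleftrightarrow> finite (rcosets\<^bsub>G\<^esub> H)"

definition dec_words :: "nat \<Rightarrow> nat list list" where
  "dec_words n = map list_decode (list_decode n)"

text \<open>MP_fi instance: n codes the pair (word for g, list of generating words of H).\<close>

definition MPfi_valid :: "('a, 'b) monoid_scheme \<Rightarrow> 'a list \<Rightarrow> nat \<Rightarrow> bool" where
  "MPfi_valid G gens n \<longleftrightarrow>
     finite_index G (subgrp_of_words G gens (dec_words (snd (prod_decode n))))"

definition MPfi_yes :: "('a, 'b) monoid_scheme \<Rightarrow> 'a list \<Rightarrow> nat \<Rightarrow> bool" where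
  "MPfi_yes G gens n \<longleftrightarrow>
     word_val G gens (list_decode (fst (prod_decode n)))
       \<in> subgrp_of_words G gens (dec_words (snd (prod_decode n)))"

definition MPfi_decidable :: "('a, 'b) monoid_scheme \<Rightarrow> 'a list \<Rightarrow> bool" where
  "MPfi_decidable G gens \<longleftrightarrow> decidable_on (MPfi_valid G gens) (MPfi_yes G gens)"

text \<open>GCP_Rec instance: n codes (word for g, (generating words of H, words b_1..b_m)),
representing g and the recognizable set K = H b_1 \<union> ... \<union> H b_m.\<close>

definition rec_set :: "('a, 'b) monoid_scheme \<Rightarrow> 'a list \<Rightarrow> nat list list \<Rightarrow> nat list list \<Rightarrow> 'a set" where
  "rec_set G gens hs bs = (\<Union>b\<in>set bs. subgrp_of_words G gens hs #>\<^bsub>G\<^esub> word_val G gens b)"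

definition GCPRec_valid :: "('a, 'b) monoid_scheme \<Rightarrow> 'a list \<Rightarrow> nat \<Rightarrow> bool" where
  "GCPRec_valid G gens n \<longleftrightarrow>
     finite_index G (subgrp_of_words G gens (dec_words (fst (prod_decode (snd (prod_decode n))))))"

definition GCPRec_yes :: "('a, 'b) monoid_scheme \<Rightarrow> 'a list \<Rightarrow> nat \<Rightarrow> bool" where
  "GCPRec_yes G gens n \<longleftrightarrow>
     (let g = word_val G gens (list_decode (fst (prod_decode n)));
          hs = dec_words (fst (prod_decode (snd (prod_decode n))));
          bs = dec_words (snd (prod_decode (snd (prod_decode n))))
      in \<exists>x\<in>carrier G. x \<otimes>\<^bsub>G\<^esub> g \<otimes>\<^bsub>G\<^esub> inv\<^bsub>G\<^esub> x \<in> rec_set G gens hs bs)"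

definition GCPRec_decidable :: "('a, 'b) monoid_scheme \<Rightarrow> 'a list \<Rightarrow> bool" where
  "GCPRec_decidable G gens \<longleftrightarrow> decidable_on (GCPRec_valid G gens) (GCPRec_yes G gens)"

end

theory Submission
  imports Defs
begin

text \<open>Let K = H b_1 \<union> ... \<union> H b_m with H of finite index. Whether x g x\<inverse> lies in H b depends
only on the right cosets H x and H b x, so x may be restricted to a finite set D of
representatives of the coset profiles y \<mapsto> (H b y)_b, b \<in> {1, b_1, ..., b_m}. A finite set of
words D containing the empty word represents every element of G as soon as it is closed, up to
profiles, under right multiplication by the generators and their inverses, and this closure is a
finite conjunction of membership queries in H, which MP_fi answers. As H has finite index there
are only finitely many profiles, so a closed D exists; the algorithm searches for the first
closed D by unbounded minimisation and then tests the finitely many candidates d g d\<inverse> \<in> H b.\<close>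

section \<open>Computable functions\<close>

definition npair :: "nat \<Rightarrow> nat \<Rightarrow> nat" where "npair a b = prod_encode (a, b)"
definition nfst :: "nat \<Rightarrow> nat" where "nfst x = fst (prod_decode x)"
definition nsnd :: "nat \<Rightarrow> nat" where "nsnd x = snd (prod_decode x)"

lemma nfst_npair [simp]: "nfst (npair a b) = a"
  and nsnd_npair [simp]: "nsnd (npair a b) = b"
  by (simp_all add: nfst_def nsnd_def npair_def prod_encode_inverse)

lemma npair_nfst_nsnd [simp]: "npair (nfst x) (nsnd x) = x"
  by (simp add: nfst_def nsnd_def npair_def prod_decode_inverse)

lemma eval_Fst: "y = nfst x \<Longrightarrow> eval Fst x y"
  using eval.intros(4) by (simp add: nfst_def)

lemma eval_Snd: "y = nsnd x \<Longrightarrow> eval Snd x y"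
  using eval.intros(5) by (simp add: nsnd_def)

lemma eval_Pair: "eval f x y \<Longrightarrow> eval g x z \<Longrightarrow> eval (Pair f g) x (npair y z)"
  using eval.intros(7) by (simp add: npair_def)

lemma eval_Prec_0: "eval f x y \<Longrightarrow> eval (Prec f g) (npair x 0) y"
  using eval.intros(8) by (simp add: npair_def)

lemma eval_Prec_Suc:
  "eval (Prec f g) (npair x n) y \<Longrightarrow> eval g (npair x (npair n y)) z \<Longrightarrow>
   eval (Prec f g) (npair x (Suc n)) z"
  using eval.intros(9) by (simp add: npair_def)

lemma eval_Mu:
  "eval f (npair x n) 0 \<Longrightarrow> (\<forall>m<n. \<exists>k. eval f (npair x m) (Suc k)) \<Longrightarrow> eval (Mu f) x n"
  using eval.intros(10) by (simp add: npair_def)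

lemmas eval_Comp = eval.intros(6)

definition computable_on :: "(nat \<Rightarrow> bool) \<Rightarrow> (nat \<Rightarrow> nat) \<Rightarrow> bool" where
  "computable_on P h \<longleftrightarrow> (\<exists>f. \<forall>x. P x \<longrightarrow> eval f x (h x))"

lemma decidable_on_iff_computable_on:
  "decidable_on V Q \<longleftrightarrow> computable_on V (\<lambda>x. if Q x then 1 else 0)"
  unfolding decidable_on_def computable_on_def ..

lemma computable_on_mono: "computable_on P h \<Longrightarrow> (\<And>x. Q x \<Longrightarrow> P x) \<Longrightarrow> computable_on Q h"
  unfolding computable_on_def by blast

lemma computable_on_cong:
  "(\<And>x. P x \<Longrightarrow> f x = g x) \<Longrightarrow> computable_on P f \<Longrightarrow> computable_on P g"
  unfolding computable_on_def by metis

lemma computable_on_id: "computable_on P (\<lambda>z. z)"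
  unfolding computable_on_def using eval.intros(3) by blast

lemma computable_on_const: "computable_on P (\<lambda>z. k)"
proof (induction k)
  case 0
  show ?case unfolding computable_on_def using eval.intros(1) by blast
next
  case (Suc k)
  then obtain f where "\<forall>x. P x \<longrightarrow> eval f x k" unfolding computable_on_def by blast
  then have "\<forall>x. P x \<longrightarrow> eval (Comp Succ f) x (Suc k)" using eval_Comp eval.intros(2) by blast
  then show ?case unfolding computable_on_def by blast
qed

lemma computable_on_comp:
  "computable_on Q g \<Longrightarrow> computable_on P f \<Longrightarrow> (\<And>z. P z \<Longrightarrow> Q (f z)) \<Longrightarrow>
   computable_on P (\<lambda>z. g (f z))"
  unfolding computable_on_def using eval_Comp by blast

lemma computable_on_comp_total:
  "computable_on (\<lambda>_. True) g \<Longrightarrow> computable_on P f \<Longrightarrow> computable_on P (\<lambda>z. g (f z))"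
  by (rule computable_on_comp) auto

lemma computable_on_nfst: "computable_on P f \<Longrightarrow> computable_on P (\<lambda>z. nfst (f z))"
  by (rule computable_on_comp_total[where g = nfst]) (auto simp: computable_on_def intro: eval_Fst)

lemma computable_on_nsnd: "computable_on P f \<Longrightarrow> computable_on P (\<lambda>z. nsnd (f z))"
  by (rule computable_on_comp_total[where g = nsnd]) (auto simp: computable_on_def intro: eval_Snd)

lemma computable_on_Suc: "computable_on P f \<Longrightarrow> computable_on P (\<lambda>z. Suc (f z))"
  by (rule computable_on_comp_total[where g = Suc]) (auto simp: computable_on_def intro: eval.intros(2))

lemma computable_on_npair:
  "computable_on P f \<Longrightarrow> computable_on P g \<Longrightarrow> computable_on P (\<lambda>z. npair (f z) (g z))"
  unfolding computable_on_def using eval_Pair by blast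

lemma computable_on_funpow:
  assumes "computable_on Q s" and "\<And>x. Q x \<Longrightarrow> Q (s x)"
  shows "computable_on (\<lambda>y. Q (nfst y)) (\<lambda>y. (s ^^ nsnd y) (nfst y))"
proof -
  obtain f where f: "\<And>x. Q x \<Longrightarrow> eval f x (s x)"
    using assms(1) unfolding computable_on_def by blast
  have Q_funpow: "Q ((s ^^ n) x)" if "Q x" for n x
    using that by (induction n) (auto intro: assms(2))
  have "eval (Prec Ident (Comp f (Comp Snd Snd))) (npair x n) ((s ^^ n) x)" if "Q x" for x n
  proof (induction n)
    case 0
    show ?case by (auto intro: eval_Prec_0 eval.intros(3))
  next
    case (Suc n)
    show ?case
      by (rule eval_Prec_Suc[OF Suc], rule eval_Comp[where y = "(s ^^ n) x"],
          rule eval_Comp[where y = "npair n ((s ^^ n) x)"]) (auto intro!: eval_Snd f Q_funpow that)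
  qed
  then show ?thesis unfolding computable_on_def by (metis npair_nfst_nsnd)
qed

lemma computable_on_if:
  assumes "computable_on P c" and "computable_on P a" and "computable_on P b"
  shows "computable_on P (\<lambda>z. if c z = 0 then a z else b z)"
proof -
  obtain fc fa fb where c: "\<And>x. P x \<Longrightarrow> eval fc x (c x)" and a: "\<And>x. P x \<Longrightarrow> eval fa x (a x)"
    and b: "\<And>x. P x \<Longrightarrow> eval fb x (b x)"
    using assms unfolding computable_on_def by metis
  have "eval (Prec fa (Comp fb Fst)) (npair x n) (if n = 0 then a x else b x)" if "P x" for x n
  proof (induction n)
    case 0
    show ?case using a[OF that] by (auto intro: eval_Prec_0)
  next
    case (Suc n)
    have "eval (Comp fb Fst) (npair x (npair n (if n = 0 then a x else b x))) (b x)"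
      by (rule eval_Comp[OF eval_Fst b[OF that]]) simp
    then show ?case using eval_Prec_Suc[OF Suc] by simp
  qed
  then have "eval (Comp (Prec fa (Comp fb Fst)) (Pair Ident fc)) x (if c x = 0 then a x else b x)"
    if "P x" for x
    using that by (meson c eval_Comp eval_Pair eval.intros(3))
  then show ?thesis unfolding computable_on_def by blast
qed

lemma computable_on_pred: "computable_on P f \<Longrightarrow> computable_on P (\<lambda>z. f z - 1)"
proof -
  have "eval (Prec Zero (Comp Fst Snd)) (npair x n) (n - 1)" for x n
  proof (induction n)
    case 0
    show ?case by (auto intro: eval_Prec_0 eval.intros(1))
  next
    case (Suc n)
    show ?case by (rule eval_Prec_Suc[OF Suc]) (auto intro!: eval_Comp[OF eval_Snd eval_Fst])
  qed
  then have "eval (Comp (Prec Zero (Comp Fst Snd)) (Pair Zero Ident)) n (n - 1)" for n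
    by (meson eval_Comp eval_Pair eval.intros(1,3))
  then have "computable_on (\<lambda>_. True) (\<lambda>n. n - 1)" unfolding computable_on_def by blast
  then show "computable_on P f \<Longrightarrow> computable_on P (\<lambda>z. f z - 1)" by (rule computable_on_comp_total)
qed

lemma computable_on_Least:
  assumes "computable_on (\<lambda>y. P (nfst y)) (\<lambda>y. if Q (nfst y) (nsnd y) then 0 else 1)"
    and "\<And>z. P z \<Longrightarrow> \<exists>n. Q z n"
  shows "computable_on P (\<lambda>z. LEAST n. Q z n)"
proof -
  obtain f where f: "\<And>y. P (nfst y) \<Longrightarrow> eval f y (if Q (nfst y) (nsnd y) then 0 else 1)"
    using assms(1) unfolding computable_on_def by blast
  have "eval (Mu f) z (LEAST n. Q z n)" if "P z" for z
  proof (rule eval_Mu)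
    show "eval f (npair z (LEAST n. Q z n)) 0"
      using f[of "npair z (LEAST n. Q z n)"] that LeastI_ex[OF assms(2)[OF that]] by simp
    show "\<forall>m<(LEAST n. Q z n). \<exists>k. eval f (npair z m) (Suc k)"
    proof (intro allI impI exI)
      fix m assume "m < (LEAST n. Q z n)"
      then have "\<not> Q z m" by (rule not_less_Least)
      then show "eval f (npair z m) (Suc 0)" using f[of "npair z m"] that by simp
    qed
  qed
  then show ?thesis unfolding computable_on_def by blast
qed

section \<open>Computable operations on coded lists\<close>

definition ncons :: "nat \<Rightarrow> nat \<Rightarrow> nat" where "ncons h t = Suc (npair h t)"
definition nhd :: "nat \<Rightarrow> nat" where "nhd c = nfst (c - 1)"
definition ntl :: "nat \<Rightarrow> nat" where "ntl c = nsnd (c - 1)"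

lemma list_decode_ncons [simp]: "list_decode (ncons h t) = h # list_decode t"
  by (simp add: ncons_def npair_def prod_encode_inverse)

lemma list_decode_nonzero: "c \<noteq> 0 \<Longrightarrow> list_decode c = nhd c # list_decode (ntl c)"
  by (cases c) (auto simp: nhd_def ntl_def nfst_def nsnd_def split: prod.split)

lemma length_list_decode_le: "length (list_decode c) \<le> c"
proof (induction c rule: list_decode.induct)
  case 1
  show ?case by simp
next
  case (2 n)
  obtain x y where xy: "prod_decode n = (x, y)" by (cases "prod_decode n")
  then have "y \<le> n" using le_prod_encode_2 by (metis prod_decode_inverse)
  then show ?case using 2[OF xy[symmetric]] xy by simp
qed

lemma computable_on_ncons:
  "computable_on P f \<Longrightarrow> computable_on P g \<Longrightarrow> computable_on P (\<lambda>z. ncons (f z) (g z))"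
  unfolding ncons_def by (intro computable_on_Suc computable_on_npair)

lemma computable_on_nhd: "computable_on P f \<Longrightarrow> computable_on P (\<lambda>z. nhd (f z))"
  unfolding nhd_def by (intro computable_on_nfst computable_on_pred)

lemma computable_on_ntl: "computable_on P f \<Longrightarrow> computable_on P (\<lambda>z. ntl (f z))"
  unfolding ntl_def by (intro computable_on_nsnd computable_on_pred)

lemmas computable_on_basic =
  computable_on_id computable_on_const computable_on_nfst computable_on_nsnd computable_on_Suc
  computable_on_npair computable_on_pred computable_on_if computable_on_ncons computable_on_nhd
  computable_on_ntl

definition nfoldl :: "(nat \<Rightarrow> nat) \<Rightarrow> nat \<Rightarrow> nat \<Rightarrow> nat \<Rightarrow> nat" where
  "nfoldl q z l a = foldl (\<lambda>acc e. q (npair z (npair e acc))) a (list_decode l)"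

lemma computable_on_nfoldl_general:
  assumes q: "computable_on (\<lambda>y. Q (nfst y)) q" and L: "computable_on P L"
    and A: "computable_on P A" and Z: "computable_on P Z" and PQ: "\<And>z. P z \<Longrightarrow> Q (Z z)"
  shows "computable_on P (\<lambda>z. nfoldl q (Z z) (L z) (A z))"
proof -
  \<comment> \<open>step consumes one list element; l iterations suffice as length (list_decode l) \<le> l\<close>
  define step where "step s = (if nfst (nsnd s) = 0 then s else
     npair (nfst s) (npair (ntl (nfst (nsnd s)))
       (q (npair (nfst s) (npair (nhd (nfst (nsnd s))) (nsnd (nsnd s)))))))" for s
  have step: "computable_on (\<lambda>s. Q (nfst s)) step"
    unfolding step_def
    by (intro computable_on_basic, rule computable_on_comp[OF q]) (intro computable_on_basic, simp)
  have Q_step: "Q (nfst (step s))" if "Q (nfst s)" for s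
    using that by (simp add: step_def)
  have step_fixed: "(step ^^ n) s = s" if "nfst (nsnd s) = 0" for n s
    using that by (induction n) (auto simp: step_def)
  have funpow_step: "(step ^^ n) (npair z (npair l a)) = npair z (npair 0 (nfoldl q z l a))"
    if "length (list_decode l) \<le> n" for n l a z
    using that
  proof (induction n arbitrary: l a)
    case 0
    then have "l = 0" by (metis le_zero_eq length_0_conv list_decode_inverse list_encode.simps(1))
    then show ?case by (simp add: nfoldl_def)
  next
    case (Suc n)
    show ?case
    proof (cases "l = 0")
      case True
      then show ?thesis by (simp add: step_fixed nfoldl_def del: funpow.simps)
    next
      case False
      have "step (npair z (npair l a)) = npair z (npair (ntl l) (q (npair z (npair (nhd l) a))))"
        using False by (simp add: step_def)
      moreover have "length (list_decode (ntl l)) \<le> n"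
        using Suc.prems list_decode_nonzero[OF False] by simp
      ultimately show ?thesis using Suc.IH list_decode_nonzero[OF False]
        by (simp add: funpow_Suc_right nfoldl_def del: funpow.simps)
    qed
  qed
  let ?init = "\<lambda>z. npair (npair (Z z) (npair (L z) (A z))) (L z)"
  have "computable_on P (\<lambda>z. nsnd (nsnd ((step ^^ nsnd (?init z)) (nfst (?init z)))))"
    by (intro computable_on_nsnd, rule computable_on_comp[OF computable_on_funpow[OF step]])
      (auto simp: Q_step PQ intro!: computable_on_npair L A Z)
  moreover have "nsnd (nsnd ((step ^^ nsnd (?init z)) (nfst (?init z)))) = nfoldl q (Z z) (L z) (A z)" for z
    using funpow_step[OF length_list_decode_le] by simp
  ultimately show ?thesis by simp
qed

lemma computable_on_nfoldl:
  "computable_on (\<lambda>y. P (nfst y)) q \<Longrightarrow> computable_on P L \<Longrightarrow> computable_on P A \<Longrightarrow>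
   computable_on P (\<lambda>z. nfoldl q z (L z) (A z))"
  by (rule computable_on_nfoldl_general[where Q = P and Z = "\<lambda>z. z"]) (auto intro: computable_on_id)

lemma computable_on_nfoldl_total:
  "computable_on (\<lambda>_. True) q \<Longrightarrow> computable_on P Z \<Longrightarrow> computable_on P L \<Longrightarrow> computable_on P A \<Longrightarrow>
   computable_on P (\<lambda>z. nfoldl q (Z z) (L z) (A z))"
  by (rule computable_on_nfoldl_general[where Q = "\<lambda>_. True"]) (auto intro: computable_on_mono)

definition cons_step :: "nat \<Rightarrow> nat" where "cons_step y = ncons (nfst (nsnd y)) (nsnd (nsnd y))"

lemma computable_on_cons_step: "computable_on P cons_step"
  unfolding cons_step_def by (intro computable_on_basic)

lemma foldl_cons_step:
  "list_decode (foldl (\<lambda>acc e. cons_step (npair z (npair e acc))) a xs) = rev xs @ list_decode a"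
  by (induction xs arbitrary: a) (auto simp: cons_step_def)

definition nrev :: "nat \<Rightarrow> nat" where "nrev l = nfoldl cons_step l l 0"
definition nappend :: "nat \<Rightarrow> nat \<Rightarrow> nat" where "nappend l1 l2 = nfoldl cons_step l1 (nrev l1) l2"

lemma list_decode_nrev [simp]: "list_decode (nrev l) = rev (list_decode l)"
  by (simp add: nrev_def nfoldl_def foldl_cons_step)

lemma list_decode_nappend [simp]: "list_decode (nappend l1 l2) = list_decode l1 @ list_decode l2"
  by (simp add: nappend_def nfoldl_def foldl_cons_step)

lemma computable_on_nrev: "computable_on P f \<Longrightarrow> computable_on P (\<lambda>z. nrev (f z))"
  unfolding nrev_def
  by (rule computable_on_comp_total[where g = "\<lambda>l. nfoldl cons_step l l 0"])
    (auto intro!: computable_on_nfoldl computable_on_cons_step computable_on_basic)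

lemma computable_on_nappend:
  "computable_on P f \<Longrightarrow> computable_on P g \<Longrightarrow> computable_on P (\<lambda>z. nappend (f z) (g z))"
  unfolding nappend_def
  by (intro computable_on_nfoldl_total computable_on_cons_step computable_on_nrev)

definition letter_inv :: "nat \<Rightarrow> nat" where
  "letter_inv k = (if even k then Suc k else k - 1)"

definition word_inv :: "nat list \<Rightarrow> nat list" where
  "word_inv w = rev (map letter_inv w)"

lemma computable_on_letter_inv: "computable_on P f \<Longrightarrow> computable_on P (\<lambda>z. letter_inv (f z))"
proof (rule computable_on_comp_total[where g = letter_inv])
  define flip :: "nat \<Rightarrow> nat" where "flip y = (if y = 0 then 1 else 0)" for y
  have parity: "(flip ^^ k) 0 = (if even k then 0 else 1)" for k
    by (induction k) (auto simp: flip_def)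
  have flip: "computable_on (\<lambda>_. True) flip"
    unfolding flip_def by (intro computable_on_basic)
  have "computable_on (\<lambda>_. True) (\<lambda>k. (flip ^^ nsnd (npair 0 k)) (nfst (npair 0 k)))"
    by (rule computable_on_comp[OF computable_on_funpow[OF flip]]) (auto intro: computable_on_basic)
  then have "computable_on (\<lambda>_. True) (\<lambda>k. if (flip ^^ k) 0 = 0 then Suc k else k - 1)"
    by (intro computable_on_basic) simp
  moreover have "(\<lambda>k. if (flip ^^ k) 0 = 0 then Suc k else k - 1) = letter_inv"
    by (simp add: fun_eq_iff letter_inv_def parity)
  ultimately show "computable_on (\<lambda>_. True) letter_inv" by simp
qed

definition inv_cons_step :: "nat \<Rightarrow> nat" where
  "inv_cons_step y = ncons (letter_inv (nfst (nsnd y))) (nsnd (nsnd y))"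

lemma computable_on_inv_cons_step: "computable_on P inv_cons_step"
  unfolding inv_cons_step_def by (intro computable_on_letter_inv computable_on_basic)

definition nword_inv :: "nat \<Rightarrow> nat" where "nword_inv l = nfoldl inv_cons_step l l 0"

lemma list_decode_nword_inv [simp]: "list_decode (nword_inv l) = word_inv (list_decode l)"
proof -
  have "list_decode (foldl (\<lambda>acc e. inv_cons_step (npair z (npair e acc))) a xs)
      = rev (map letter_inv xs) @ list_decode a" for z a xs
    by (induction xs arbitrary: a) (auto simp: inv_cons_step_def)
  then show ?thesis by (simp add: nword_inv_def nfoldl_def word_inv_def)
qed

lemma computable_on_nword_inv: "computable_on P f \<Longrightarrow> computable_on P (\<lambda>z. nword_inv (f z))"
  unfolding nword_inv_def
  by (rule computable_on_comp_total[where g = "\<lambda>l. nfoldl inv_cons_step l l 0"])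
    (auto intro!: computable_on_nfoldl computable_on_inv_cons_step computable_on_basic)

definition nball :: "(nat \<Rightarrow> nat) \<Rightarrow> nat \<Rightarrow> nat \<Rightarrow> nat" where
  "nball q z l = (if \<forall>e\<in>set (list_decode l). q (npair z e) \<noteq> 0 then 1 else 0)"

definition nbex :: "(nat \<Rightarrow> nat) \<Rightarrow> nat \<Rightarrow> nat \<Rightarrow> nat" where
  "nbex q z l = (if \<exists>e\<in>set (list_decode l). q (npair z e) \<noteq> 0 then 1 else 0)"

lemma computable_on_nball:
  assumes q: "computable_on (\<lambda>y. P (nfst y)) q" and L: "computable_on P L"
  shows "computable_on P (\<lambda>z. nball q z (L z))"
proof -
  define step :: "nat \<Rightarrow> nat" where "step y = (if nsnd (nsnd y) = 0 then 0
    else if q (npair (nfst y) (nfst (nsnd y))) = 0 then 0 else 1)" for y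
  have fold: "foldl (\<lambda>acc e. step (npair z (npair e acc))) a xs
      = (if a \<noteq> 0 \<and> (\<forall>e\<in>set xs. q (npair z e) \<noteq> 0) then (if xs = [] then a else 1) else 0)" for a xs z
    by (induction xs arbitrary: a) (auto simp: step_def)
  have "computable_on P (\<lambda>z. nfoldl step z (L z) 1)"
    unfolding step_def
    by (intro computable_on_nfoldl computable_on_basic L, rule computable_on_comp[OF q])
      (intro computable_on_basic, simp)
  moreover have "nfoldl step z l 1 = nball q z l" for z l
    unfolding nfoldl_def nball_def fold by simp
  ultimately show ?thesis by simp
qed

lemma computable_on_nbex:
  assumes q: "computable_on (\<lambda>y. P (nfst y)) q" and L: "computable_on P L"
  shows "computable_on P (\<lambda>z. nbex q z (L z))"
proof -
  define step :: "nat \<Rightarrow> nat" where "step y = (if nsnd (nsnd y) = 0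
    then (if q (npair (nfst y) (nfst (nsnd y))) = 0 then 0 else 1) else 1)" for y
  have fold: "foldl (\<lambda>acc e. step (npair z (npair e acc))) a xs
      = (if a \<noteq> 0 \<or> (\<exists>e\<in>set xs. q (npair z e) \<noteq> 0) then (if xs = [] then a else 1) else 0)" for a xs z
    by (induction xs arbitrary: a) (auto simp: step_def)
  have "computable_on P (\<lambda>z. nfoldl step z (L z) 0)"
    unfolding step_def
    by (intro computable_on_nfoldl computable_on_basic L, rule computable_on_comp[OF q])
      (intro computable_on_basic, simp)
  moreover have "nfoldl step z l 0 = nbex q z l" for z l
    unfolding nfoldl_def nbex_def fold by simp
  ultimately show ?thesis by simp
qed

section \<open>Words and coset profiles\<close>

text \<open>Two elements have the same coset profile with respect to bs iff, for every b in bs, they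
lie in the same right coset of the conjugate inv b H b.\<close>

definition coset_profile :: "('a, 'b) monoid_scheme \<Rightarrow> 'a set \<Rightarrow> 'a list \<Rightarrow> 'a \<Rightarrow> 'a set list" where
  "coset_profile G H bs y = map (\<lambda>b. H #>\<^bsub>G\<^esub> (b \<otimes>\<^bsub>G\<^esub> y)) bs"

lemma coset_profile_eq_iff:
  "coset_profile G H bs x = coset_profile G H bs y \<longleftrightarrow>
   (\<forall>b\<in>set bs. H #>\<^bsub>G\<^esub> (b \<otimes>\<^bsub>G\<^esub> x) = H #>\<^bsub>G\<^esub> (b \<otimes>\<^bsub>G\<^esub> y))"
  by (simp add: coset_profile_def map_eq_conv)

context group
begin

lemma gens_nth_closed:
  "set gens \<subseteq> carrier G \<Longrightarrow> k < 2 * length gens \<Longrightarrow> gens ! (k div 2) \<in> carrier G"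
  using nth_mem[of "k div 2" gens] by auto

lemma gen_letter_closed: "set gens \<subseteq> carrier G \<Longrightarrow> gen_letter G gens k \<in> carrier G"
  by (simp add: gen_letter_def gens_nth_closed)

lemma word_val_closed: "set gens \<subseteq> carrier G \<Longrightarrow> word_val G gens w \<in> carrier G"
  unfolding word_val_def by (induction w) (auto intro: gen_letter_closed)

lemma word_val_Nil [simp]: "word_val G gens [] = \<one>"
  by (simp add: word_val_def)

lemma word_val_Cons: "word_val G gens (a # w) = gen_letter G gens a \<otimes> word_val G gens w"
  by (simp add: word_val_def)

lemma word_val_append:
  "set gens \<subseteq> carrier G \<Longrightarrow> word_val G gens (u @ v) = word_val G gens u \<otimes> word_val G gens v"
  by (induction u) (auto simp: word_val_Cons m_assoc gen_letter_closed word_val_closed)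

lemma word_val_singleton: "set gens \<subseteq> carrier G \<Longrightarrow> word_val G gens [a] = gen_letter G gens a"
  by (simp add: word_val_Cons gen_letter_closed)

lemma gen_letter_letter_inv:
  assumes "set gens \<subseteq> carrier G"
  shows "gen_letter G gens (letter_inv k) = inv gen_letter G gens k"
proof (cases "even k")
  case True
  then have "Suc k div 2 = k div 2" and "Suc k < 2 * length gens \<longleftrightarrow> k < 2 * length gens"
    by presburger+
  then show ?thesis using True by (simp add: letter_inv_def gen_letter_def)
next
  case False
  then have "(k - 1) div 2 = k div 2" and "k - 1 < 2 * length gens \<longleftrightarrow> k < 2 * length gens"
    and "even (k - 1)"
    by presburger+
  then show ?thesis using False assms by (simp add: letter_inv_def gen_letter_def gens_nth_closed)
qed

lemma word_val_word_inv:
  "set gens \<subseteq> carrier G \<Longrightarrow> word_val G gens (word_inv w) = inv (word_val G gens w)"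
  by (induction w) (auto simp: word_inv_def word_val_append word_val_singleton gen_letter_letter_inv
      word_val_Cons inv_mult_group gen_letter_closed word_val_closed)

lemma exists_word_val:
  assumes "set gens \<subseteq> carrier G" and "generate G (set gens) = carrier G" and "x \<in> carrier G"
  shows "\<exists>w. word_val G gens w = x"
proof -
  have "x \<in> generate G (set gens)" using assms(2,3) by simp
  then show ?thesis
  proof (induction rule: generate.induct)
    case one
    show ?case by (rule exI[of _ "[]"]) simp
  next
    case (incl h)
    then obtain i where "i < length gens" "h = gens ! i" by (metis in_set_conv_nth)
    then have "gen_letter G gens (2 * i) = h" by (simp add: gen_letter_def)
    then show ?case using assms(1) by (metis word_val_singleton)
  next
    case (inv h)
    then obtain i where "i < length gens" "h = gens ! i" by (metis in_set_conv_nth)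
    then have "gen_letter G gens (2 * i + 1) = inv h" by (simp add: gen_letter_def)
    then show ?case using assms(1) by (metis word_val_singleton)
  next
    case (eng h1 h2)
    then show ?case using assms(1) by (metis word_val_append)
  qed
qed

lemma rcos_eq_iff:
  assumes "subgroup H G" and "y \<in> carrier G" and "z \<in> carrier G"
  shows "H #> y = H #> z \<longleftrightarrow> y \<otimes> inv z \<in> H"
  using assms subgroup.rcos_module[OF assms(1) is_group assms(3,2)]
  by (metis repr_independence repr_independenceD)

lemma conj_mem_rcos_iff:
  assumes H: "subgroup H G" and "x \<in> carrier G" and "g \<in> carrier G" and "b \<in> carrier G"
  shows "x \<otimes> g \<otimes> inv x \<in> H #> b \<longleftrightarrow> H #> (x \<otimes> g) = H #> (b \<otimes> x)"
proof -
  have "x \<otimes> g \<otimes> inv x \<in> H #> b \<longleftrightarrow> x \<otimes> g \<otimes> inv x \<otimes> inv b \<in> H"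
    using subgroup.rcos_module[OF H is_group] assms by simp
  also have "x \<otimes> g \<otimes> inv x \<otimes> inv b = (x \<otimes> g) \<otimes> inv (b \<otimes> x)"
    using assms by (simp add: inv_mult_group m_assoc)
  also have "\<dots> \<in> H \<longleftrightarrow> H #> (x \<otimes> g) = H #> (b \<otimes> x)"
    using rcos_eq_iff[OF H] assms by simp
  finally show ?thesis .
qed

lemma coset_profile_mult_right:
  assumes "subgroup H G" and "set bs \<subseteq> carrier G"
    and "x \<in> carrier G" and "y \<in> carrier G" and "z \<in> carrier G"
    and "coset_profile G H bs x = coset_profile G H bs y"
  shows "coset_profile G H bs (x \<otimes> z) = coset_profile G H bs (y \<otimes> z)"
proof -
  have "H #> (b \<otimes> (x \<otimes> z)) = H #> (b \<otimes> (y \<otimes> z))" if "b \<in> set bs" for b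
  proof -
    have b: "b \<in> carrier G" and H: "H \<subseteq> carrier G"
      using that assms(1,2) subgroup.subset by auto
    have "H #> (b \<otimes> (x \<otimes> z)) = (H #> (b \<otimes> x)) #> z"
      using assms b H by (simp add: coset_mult_assoc m_assoc)
    also have "\<dots> = (H #> (b \<otimes> y)) #> z"
      using assms(6) that by (simp add: coset_profile_eq_iff)
    also have "\<dots> = H #> (b \<otimes> (y \<otimes> z))"
      using assms b H by (simp add: coset_mult_assoc m_assoc)
    finally show ?thesis .
  qed
  then show ?thesis by (simp add: coset_profile_eq_iff)
qed

lemma finite_coset_profiles:
  assumes "subgroup H G" and "finite (rcosets H)" and "set bs \<subseteq> carrier G"
  shows "finite (coset_profile G H bs ` carrier G)"
proof (rule finite_subset)
  show "coset_profile G H bs ` carrier G \<subseteq> {l. set l \<subseteq> rcosets H \<and> length l = length bs}"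
    using assms(3) subgroup.subset[OF assms(1)]
    by (auto simp: coset_profile_def intro!: rcosetsI m_closed)
  show "finite {l. set l \<subseteq> rcosets H \<and> length l = length bs}"
    using finite_lists_length_eq[OF assms(2)] .
qed

lemma exists_words_representing_coset_profiles:
  assumes gens: "set gens \<subseteq> carrier G" and gen: "generate G (set gens) = carrier G"
    and "subgroup H G" and "finite (rcosets H)" and "set bs \<subseteq> carrier G"
  shows "\<exists>ws. \<forall>y\<in>carrier G. \<exists>w\<in>set ws.
    coset_profile G H bs (word_val G gens w) = coset_profile G H bs y"
proof -
  let ?profile = "coset_profile G H bs"
  let ?rep = "\<lambda>y. inv_into (carrier G) ?profile (?profile y)"
  obtain word where word: "\<forall>y\<in>carrier G. word_val G gens (word y) = y"
    using bchoice[of "carrier G" "\<lambda>y w. word_val G gens w = y"] exists_word_val[OF gens gen] by blast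
  have "?rep ` carrier G = inv_into (carrier G) ?profile ` ?profile ` carrier G"
    by (simp add: image_image)
  then have "finite (?rep ` carrier G)"
    using finite_coset_profiles[OF assms(3-5)] by simp
  then obtain reps where reps: "set reps = ?rep ` carrier G"
    by (blast dest: finite_list)
  have "\<exists>w\<in>set (map word reps). ?profile (word_val G gens w) = ?profile y" if y: "y \<in> carrier G" for y
  proof
    have "?rep y \<in> carrier G" and "?profile (?rep y) = ?profile y"
      using y by (auto intro: inv_into_into f_inv_into_f)
    then show "?profile (word_val G gens (word (?rep y))) = ?profile y"
      using word by simp
    show "word (?rep y) \<in> set (map word reps)"
      using reps y by simp
  qed
  then show ?thesis by blast
qed

lemma letter_closed_set_represents_words:
  assumes gens: "set gens \<subseteq> carrier G" and D: "\<one> \<in> D" "D \<subseteq> carrier G"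
    and cong: "\<And>x y z. x \<in> carrier G \<Longrightarrow> y \<in> carrier G \<Longrightarrow> z \<in> carrier G \<Longrightarrow>
      \<sigma> x = \<sigma> y \<Longrightarrow> \<sigma> (x \<otimes> z) = \<sigma> (y \<otimes> z)"
    and closed: "\<And>d a. d \<in> D \<Longrightarrow> a < 2 * length gens \<Longrightarrow>
      \<exists>d'\<in>D. \<sigma> (d \<otimes> gen_letter G gens a) = \<sigma> d'"
  shows "\<exists>d\<in>D. \<sigma> (word_val G gens w) = \<sigma> d"
proof (induction w rule: rev_induct)
  case Nil
  show ?case using D by auto
next
  case (snoc a w)
  then obtain d where d: "d \<in> D" "\<sigma> (word_val G gens w) = \<sigma> d" by blast
  have "d \<in> carrier G" using d D by auto
  have "word_val G gens (w @ [a]) = word_val G gens w \<otimes> gen_letter G gens a"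
    using gens by (simp add: word_val_append word_val_singleton)
  then have step: "\<sigma> (word_val G gens (w @ [a])) = \<sigma> (d \<otimes> gen_letter G gens a)"
    using cong[OF word_val_closed[OF gens] \<open>d \<in> carrier G\<close> gen_letter_closed[OF gens] d(2)] by simp
  show ?case
  proof (cases "a < 2 * length gens")
    case True
    then show ?thesis using closed[OF d(1)] step by metis
  next
    case False
    then have "d \<otimes> gen_letter G gens a = d"
      using \<open>d \<in> carrier G\<close> by (simp add: gen_letter_def)
    then show ?thesis using step d(1) by auto
  qed
qed

lemma conj_mem_rcosets_iff_representative:
  assumes H: "subgroup H G" and g: "g \<in> carrier G"
    and bs: "set bs \<subseteq> carrier G" "\<one> \<in> set bs" "B \<subseteq> set bs" and D: "D \<subseteq> carrier G"
    and cover: "\<And>x. x \<in> carrier G \<Longrightarrow> \<exists>d\<in>D. coset_profile G H bs x = coset_profile G H bs d"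
  shows "(\<exists>x\<in>carrier G. \<exists>b\<in>B. x \<otimes> g \<otimes> inv x \<in> H #> b) \<longleftrightarrow>
    (\<exists>d\<in>D. \<exists>b\<in>B. d \<otimes> g \<otimes> inv d \<in> H #> b)"
proof
  assume "\<exists>x\<in>carrier G. \<exists>b\<in>B. x \<otimes> g \<otimes> inv x \<in> H #> b"
  then obtain x b where x: "x \<in> carrier G" and b: "b \<in> B" and conj: "x \<otimes> g \<otimes> inv x \<in> H #> b"
    by blast
  obtain d where d: "d \<in> D" and same_cosets: "\<And>c. c \<in> set bs \<Longrightarrow> H #> (c \<otimes> x) = H #> (c \<otimes> d)"
    using cover[OF x] by (auto simp: coset_profile_eq_iff)
  have "b \<in> carrier G" "d \<in> carrier G" "H \<subseteq> carrier G"
    using b bs d D subgroup.subset[OF H] by auto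
  have "H #> (d \<otimes> g) = (H #> d) #> g"
    using \<open>d \<in> carrier G\<close> \<open>H \<subseteq> carrier G\<close> g by (simp add: coset_mult_assoc)
  also have "\<dots> = (H #> x) #> g"
    using same_cosets[OF bs(2)] x \<open>d \<in> carrier G\<close> by simp
  also have "\<dots> = H #> (b \<otimes> x)"
    using conj conj_mem_rcos_iff[OF H x g \<open>b \<in> carrier G\<close>] x g \<open>H \<subseteq> carrier G\<close>
    by (simp add: coset_mult_assoc)
  also have "\<dots> = H #> (b \<otimes> d)"
    using same_cosets b bs by blast
  finally show "\<exists>d\<in>D. \<exists>b\<in>B. d \<otimes> g \<otimes> inv d \<in> H #> b"
    using conj_mem_rcos_iff[OF H \<open>d \<in> carrier G\<close> g \<open>b \<in> carrier G\<close>] d b by blast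
next
  assume "\<exists>d\<in>D. \<exists>b\<in>B. d \<otimes> g \<otimes> inv d \<in> H #> b"
  then show "\<exists>x\<in>carrier G. \<exists>b\<in>B. x \<otimes> g \<otimes> inv x \<in> H #> b"
    using D by blast
qed

end

section \<open>The decision procedure\<close>

abbreviation code_val :: "('a, 'b) monoid_scheme \<Rightarrow> 'a list \<Rightarrow> nat \<Rightarrow> 'a" where
  "code_val G gens c \<equiv> word_val G gens (list_decode c)"

lemma GCPRec_valid_iff:
  "GCPRec_valid G gens x \<longleftrightarrow> finite_index G (subgrp_of_words G gens (dec_words (nfst (nsnd x))))"
  by (simp add: GCPRec_valid_def nfst_def nsnd_def)

text \<open>The certificate n codes a list of words which, together with the empty word, forms the
candidate set D. Since b d a d'\<inverse> b\<inverse> lies in H iff H b d a = H b d', the certificate is accepted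
iff right multiplication by every letter a maps D into D up to coset profiles with respect to
1, b_1, ..., b_m.\<close>

definition closed_certificate :: "('a, 'b) monoid_scheme \<Rightarrow> 'a list \<Rightarrow> nat \<Rightarrow> nat \<Rightarrow> bool" where
  "closed_certificate G gens x n \<longleftrightarrow>
    (\<forall>d\<in>set (0 # list_decode n). \<forall>a\<in>set [0..<2 * length gens]. \<exists>d'\<in>set (0 # list_decode n).
       \<forall>b\<in>set (0 # list_decode (nsnd (nsnd x))).
         word_val G gens (list_decode b @ list_decode d @ [a] @ word_inv (list_decode d') @ word_inv (list_decode b))
           \<in> subgrp_of_words G gens (dec_words (nfst (nsnd x))))"

definition conjugate_found :: "('a, 'b) monoid_scheme \<Rightarrow> 'a list \<Rightarrow> nat \<Rightarrow> nat \<Rightarrow> bool" where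
  "conjugate_found G gens x n \<longleftrightarrow>
    (\<exists>d\<in>set (0 # list_decode n). \<exists>b\<in>set (list_decode (nsnd (nsnd x))).
       word_val G gens (list_decode d @ list_decode (nfst x) @ word_inv (list_decode d) @ word_inv (list_decode b))
         \<in> subgrp_of_words G gens (dec_words (nfst (nsnd x))))"

definition member_test :: "('a, 'b) monoid_scheme \<Rightarrow> 'a list \<Rightarrow> nat \<Rightarrow> nat \<Rightarrow> nat" where
  "member_test G gens w c = (if code_val G gens w \<in> subgrp_of_words G gens (dec_words c) then 1 else 0)"

lemma computable_on_member_test:
  assumes "MPfi_decidable G gens" and "computable_on P W" and "computable_on P C"
    and "\<And>z. P z \<Longrightarrow> finite_index G (subgrp_of_words G gens (dec_words (C z)))"
  shows "computable_on P (\<lambda>z. member_test G gens (W z) (C z))"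
proof -
  have valid: "MPfi_valid G gens (npair w c) \<longleftrightarrow> finite_index G (subgrp_of_words G gens (dec_words c))"
    and yes: "MPfi_yes G gens (npair w c) \<longleftrightarrow> code_val G gens w \<in> subgrp_of_words G gens (dec_words c)"
    for w c
    by (simp_all add: MPfi_valid_def MPfi_yes_def npair_def prod_encode_inverse)
  have "computable_on (MPfi_valid G gens) (\<lambda>q. if MPfi_yes G gens q then 1 else 0)"
    using assms(1) by (simp add: MPfi_decidable_def decidable_on_iff_computable_on)
  then have "computable_on P (\<lambda>z. if MPfi_yes G gens (npair (W z) (C z)) then 1 else 0)"
    by (rule computable_on_comp) (auto intro: computable_on_npair assms(2,3) simp: valid assms(4))
  then show ?thesis by (simp add: yes member_test_def)
qed

lemma if_eq_0_iff: "((if P then 1 else 0) = (0::nat)) \<longleftrightarrow> \<not> P"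
  by simp

lemma computable_on_closed_certificate:
  assumes "MPfi_decidable G gens"
  shows "computable_on (\<lambda>y. GCPRec_valid G gens (nfst y))
    (\<lambda>y. if closed_certificate G gens (nfst y) (nsnd y) then 0 else 1)"
proof -
  \<comment> \<open>each quantifier pairs its bound variable onto the environment, so inside the k-th
    quantifier the variable bound j levels further out is nsnd (nfst^j z)\<close>
  have impl: "(if closed_certificate G gens (nfst y) (nsnd y) then 0 else 1) =
    (if nball (\<lambda>z1. nball (\<lambda>z2. nbex (\<lambda>z3. nball (\<lambda>z4.
       member_test G gens (nappend (nsnd z4) (nappend (nsnd (nfst (nfst (nfst z4))))
         (nappend (ncons (nsnd (nfst (nfst z4))) 0) (nappend (nword_inv (nsnd (nfst z4))) (nword_inv (nsnd z4))))))
         (nfst (nsnd (nfst (nfst (nfst (nfst (nfst z4))))))))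
       z3 (ncons 0 (nsnd (nsnd (nfst (nfst (nfst (nfst z3))))))))
       z2 (ncons 0 (nsnd (nfst (nfst z2)))))
       z1 (list_encode [0..<2 * length gens]))
     y (ncons 0 (nsnd y)) = 0 then 1 else 0)" for y
    unfolding closed_certificate_def nball_def nbex_def member_test_def
    by (simp only: if_eq_0_iff not_not if_conn(4) nfst_npair nsnd_npair list_decode_ncons list_decode_nappend
        list_decode_nword_inv list_encode_inverse append_assoc append.simps list_decode.simps(1))
  show ?thesis
    unfolding impl
    by (intro computable_on_if computable_on_nball computable_on_nbex computable_on_member_test[OF assms]
        computable_on_nappend computable_on_nword_inv computable_on_basic) (auto simp: GCPRec_valid_iff)
qed

lemma computable_on_conjugate_found:
  assumes "MPfi_decidable G gens"
  shows "computable_on (\<lambda>y. GCPRec_valid G gens (nfst y))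
    (\<lambda>y. if conjugate_found G gens (nfst y) (nsnd y) then 1 else 0)"
proof -
  have impl: "(if conjugate_found G gens (nfst y) (nsnd y) then 1 else 0) =
    nbex (\<lambda>z1. nbex (\<lambda>z2.
       member_test G gens (nappend (nsnd (nfst z2)) (nappend (nfst (nfst (nfst (nfst z2))))
         (nappend (nword_inv (nsnd (nfst z2))) (nword_inv (nsnd z2)))))
         (nfst (nsnd (nfst (nfst (nfst z2))))))
       z1 (nsnd (nsnd (nfst (nfst z1)))))
     y (ncons 0 (nsnd y))" for y
    unfolding conjugate_found_def nbex_def member_test_def
    by (simp only: if_eq_0_iff not_not nfst_npair nsnd_npair list_decode_ncons list_decode_nappend
        list_decode_nword_inv append_assoc)
  show ?thesis
    unfolding impl
    by (intro computable_on_nbex computable_on_member_test[OF assms] computable_on_nappend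
        computable_on_nword_inv computable_on_basic) (auto simp: GCPRec_valid_iff)
qed

context group
begin

lemma subgroup_subgrp_of_words:
  "set gens \<subseteq> carrier G \<Longrightarrow> subgroup (subgrp_of_words G gens hs) G"
  unfolding subgrp_of_words_def by (rule generate_is_subgroup) (auto intro: word_val_closed)

lemma word_val_closure_test_iff:
  assumes gens: "set gens \<subseteq> carrier G" and H: "subgroup H G"
  shows "word_val G gens (b @ d @ [a] @ word_inv d' @ word_inv b) \<in> H \<longleftrightarrow>
    H #> (word_val G gens b \<otimes> (word_val G gens d \<otimes> gen_letter G gens a)) =
    H #> (word_val G gens b \<otimes> word_val G gens d')"
proof -
  have "word_val G gens (b @ d @ [a] @ word_inv d' @ word_inv b) =
    (word_val G gens b \<otimes> (word_val G gens d \<otimes> gen_letter G gens a)) \<otimes>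
    inv (word_val G gens b \<otimes> word_val G gens d')"
    using gens by (simp add: word_val_append word_val_Cons word_val_word_inv m_assoc inv_mult_group
        word_val_closed gen_letter_closed)
  then show ?thesis
    using rcos_eq_iff[OF H] gens by (simp add: word_val_closed gen_letter_closed)
qed

lemma word_val_conjugate_test_iff:
  assumes gens: "set gens \<subseteq> carrier G" and H: "subgroup H G"
  shows "word_val G gens (d @ g @ word_inv d @ word_inv b) \<in> H \<longleftrightarrow>
    word_val G gens d \<otimes> word_val G gens g \<otimes> inv (word_val G gens d) \<in> H #> word_val G gens b"
proof -
  have "word_val G gens (d @ g @ word_inv d @ word_inv b) =
    (word_val G gens d \<otimes> word_val G gens g \<otimes> inv (word_val G gens d)) \<otimes> inv (word_val G gens b)"
    using gens by (simp add: word_val_append word_val_word_inv m_assoc word_val_closed)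
  then show ?thesis
    using subgroup.rcos_module[OF H is_group] gens by (simp add: word_val_closed)
qed

lemma closed_certificate_iff:
  fixes x n :: nat
  assumes gens: "set gens \<subseteq> carrier G"
  defines "H \<equiv> subgrp_of_words G gens (dec_words (nfst (nsnd x)))"
    and "bs \<equiv> map (code_val G gens) (0 # list_decode (nsnd (nsnd x)))"
  shows "closed_certificate G gens x n \<longleftrightarrow>
    (\<forall>d\<in>set (0 # list_decode n). \<forall>a\<in>set [0..<2 * length gens]. \<exists>d'\<in>set (0 # list_decode n).
       coset_profile G H bs (code_val G gens d \<otimes> gen_letter G gens a) =
       coset_profile G H bs (code_val G gens d'))"
proof -
  have H: "subgroup H G"
    unfolding H_def using gens by (rule subgroup_subgrp_of_words)
  show ?thesis
    unfolding closed_certificate_def H_def[symmetric] word_val_closure_test_iff[OF gens H]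
      coset_profile_def bs_def map_map o_def map_eq_conv ..
qed

lemma conjugate_found_iff:
  fixes x n :: nat
  assumes gens: "set gens \<subseteq> carrier G"
  defines "H \<equiv> subgrp_of_words G gens (dec_words (nfst (nsnd x)))"
  shows "conjugate_found G gens x n \<longleftrightarrow>
    (\<exists>d\<in>set (0 # list_decode n). \<exists>b\<in>set (list_decode (nsnd (nsnd x))).
       code_val G gens d \<otimes> code_val G gens (nfst x) \<otimes> inv (code_val G gens d) \<in> H #> code_val G gens b)"
proof -
  have H: "subgroup H G"
    unfolding H_def using gens by (rule subgroup_subgrp_of_words)
  show ?thesis
    unfolding conjugate_found_def H_def[symmetric] word_val_conjugate_test_iff[OF gens H] ..
qed

lemma closed_certificate_exists:
  assumes gens: "set gens \<subseteq> carrier G" and gen: "generate G (set gens) = carrier G"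
    and valid: "GCPRec_valid G gens x"
  shows "\<exists>n. closed_certificate G gens x n"
proof -
  define H where "H = subgrp_of_words G gens (dec_words (nfst (nsnd x)))"
  define bs where "bs = map (code_val G gens) (0 # list_decode (nsnd (nsnd x)))"
  have "finite (rcosets H)" and "set bs \<subseteq> carrier G"
    using valid gens word_val_closed by (auto simp: H_def bs_def GCPRec_valid_iff finite_index_def)
  then obtain ws where ws: "\<forall>y\<in>carrier G. \<exists>w\<in>set ws.
      coset_profile G H bs (word_val G gens w) = coset_profile G H bs y"
    using exists_words_representing_coset_profiles[OF gens gen subgroup_subgrp_of_words[OF gens]]
    unfolding H_def by blast
  let ?n = "list_encode (map list_encode ws)"
  have "closed_certificate G gens x ?n"
    unfolding closed_certificate_iff[OF gens] H_def[symmetric] bs_def[symmetric]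
  proof (intro ballI)
    fix d a assume "a \<in> set [0..<2 * length gens]"
    have "code_val G gens d \<otimes> gen_letter G gens a \<in> carrier G"
      using gens by (simp add: word_val_closed gen_letter_closed)
    then obtain w where "w \<in> set ws"
      and "coset_profile G H bs (word_val G gens w) =
        coset_profile G H bs (code_val G gens d \<otimes> gen_letter G gens a)"
      using ws by blast
    then show "\<exists>d'\<in>set (0 # list_decode ?n).
      coset_profile G H bs (code_val G gens d \<otimes> gen_letter G gens a) = coset_profile G H bs (code_val G gens d')"
      by (intro bexI[of _ "list_encode w"]) auto
  qed
  then show ?thesis ..
qed

lemma conjugate_found_iff_GCPRec_yes:
  assumes gens: "set gens \<subseteq> carrier G" and gen: "generate G (set gens) = carrier G"
    and closed: "closed_certificate G gens x n"
  shows "conjugate_found G gens x n \<longleftrightarrow> GCPRec_yes G gens x"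
proof -
  define H where "H = subgrp_of_words G gens (dec_words (nfst (nsnd x)))"
  define bs where "bs = map (code_val G gens) (0 # list_decode (nsnd (nsnd x)))"
  define D where "D = code_val G gens ` set (0 # list_decode n)"
  define B where "B = code_val G gens ` set (list_decode (nsnd (nsnd x)))"
  let ?g = "code_val G gens (nfst x)"
  have H: "subgroup H G"
    unfolding H_def using gens by (rule subgroup_subgrp_of_words)
  have bs: "set bs \<subseteq> carrier G" "\<one> \<in> set bs" "B \<subseteq> set bs"
    and D: "\<one> \<in> D" "D \<subseteq> carrier G"
    using gens word_val_closed by (auto simp: bs_def B_def D_def)
  have "\<exists>d'\<in>D. coset_profile G H bs (d \<otimes> gen_letter G gens a) = coset_profile G H bs d'"
    if "d \<in> D" and "a < 2 * length gens" for d a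
  proof -
    obtain c where c: "c \<in> set (0 # list_decode n)" "d = code_val G gens c"
      using \<open>d \<in> D\<close> unfolding D_def by blast
    moreover have "a \<in> set [0..<2 * length gens]"
      using \<open>a < 2 * length gens\<close> by simp
    ultimately obtain c' where "c' \<in> set (0 # list_decode n)"
      and "coset_profile G H bs (d \<otimes> gen_letter G gens a) = coset_profile G H bs (code_val G gens c')"
      using closed unfolding closed_certificate_iff[OF gens] H_def[symmetric] bs_def[symmetric] by blast
    then show ?thesis by (auto simp: D_def)
  qed
  then have "\<exists>d\<in>D. coset_profile G H bs (word_val G gens w) = coset_profile G H bs d" for w
    using letter_closed_set_represents_words[where \<sigma> = "coset_profile G H bs",
        OF gens D coset_profile_mult_right[OF H bs(1)]] by blast
  then have cover: "\<exists>d\<in>D. coset_profile G H bs y = coset_profile G H bs d" if "y \<in> carrier G" for y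
    using exists_word_val[OF gens gen that] by metis
  have "GCPRec_yes G gens x \<longleftrightarrow> (\<exists>y\<in>carrier G. \<exists>b\<in>B. y \<otimes> ?g \<otimes> inv y \<in> H #> b)"
    by (auto simp: GCPRec_yes_def rec_set_def dec_words_def H_def B_def nfst_def nsnd_def)
  also have "\<dots> \<longleftrightarrow> (\<exists>d\<in>D. \<exists>b\<in>B. d \<otimes> ?g \<otimes> inv d \<in> H #> b)"
    using conj_mem_rcosets_iff_representative[OF H word_val_closed[OF gens] bs D(2) cover] .
  also have "\<dots> \<longleftrightarrow> conjugate_found G gens x n"
    unfolding conjugate_found_iff[OF gens] H_def D_def B_def by blast
  finally show ?thesis ..
qed

end

theorem proposition3p7:
  fixes G :: "('a, 'b) monoid_scheme" and gens :: "'a list"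
  assumes "group G"
    and "set gens \<subseteq> carrier G"
    and "generate G (set gens) = carrier G"
    and "MPfi_decidable G gens"
  shows "GCPRec_decidable G gens"
proof -
  let ?V = "GCPRec_valid G gens"
  let ?search = "\<lambda>x. LEAST n. closed_certificate G gens x n"
  have exists: "\<exists>n. closed_certificate G gens x n" if "?V x" for x
    using group.closed_certificate_exists[OF assms(1-3) that] .
  have search: "computable_on ?V ?search"
    by (rule computable_on_Least[OF computable_on_closed_certificate[OF assms(4)] exists])
  have "computable_on ?V (\<lambda>x. if conjugate_found G gens (nfst (npair x (?search x))) (nsnd (npair x (?search x)))
      then 1 else 0)"
    by (rule computable_on_comp[OF computable_on_conjugate_found[OF assms(4)]])
      (auto intro: computable_on_npair computable_on_id search)
  then have decider: "computable_on ?V (\<lambda>x. if conjugate_found G gens x (?search x) then 1 else 0)"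
    by simp
  have correct: "conjugate_found G gens x (?search x) \<longleftrightarrow> GCPRec_yes G gens x" if "?V x" for x
    using group.conjugate_found_iff_GCPRec_yes[OF assms(1-3) LeastI_ex[OF exists[OF that]]] .
  show ?thesis
    unfolding GCPRec_decidable_def decidable_on_iff_computable_on
    by (rule computable_on_cong[OF _ decider]) (simp add: correct)
qed

end
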